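(* Let $\mathfrak q$ be any finite-dimensional Lie algebra over an algebraically closed field $\Bbbk$ of characteristic $0$. Then $\{\mathcal Z(\widehat{\mathfrak q},[0]),\mathcal Z(\widehat{\mathfrak q},[0])\}=0$.
   Context: $\mathfrak q[t,t^{-1}]=\mathfrak q\otimes\Bbbk[t,t^{-1}]$ is the loop algebra. Regard $S(\mathfrak q[t])$ as the quotient of $S(\mathfrak q[t,t^{-1}])$ by the ideal generated by $t^{-1}\mathfrak q[t^{-1}]$; equivalently identify $\mathfrak q[t]$ with $\mathfrak q[t,t^{-1}]/t^{-1}\mathfrak q[t^{-1}]$, giving an action of $\mathfrak q[t^{-1}]$ on $S(\mathfrak q[t])$. Then $\mathcal Z(\widehat{\mathfrak q},[0])=S(\mathfrak q[t])^{\mathfrak q[t^{-1}]}$ is the subalgebra of invariants, i.e. the $Y\in S(\mathfrak q[t])$ with $\{x,Y\}\in t^{-1}\mathfrak q[t^{-1}]\,S(\mathfrak q[t,t^{-1}])$ for all $x\in\mathfrak q[t^{-1}]$. $\{\,,\}$ denotes the Lie–Poisson bracket ($\{x,y\}=[x,y]$ on Lie algebra elements). *)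

theory Defs
  imports "HOL-Library.Poly_Mapping" "HOL-Computational_Algebra.Polynomial"
begin

definition alg_closed_field :: "'k::field itself \<Rightarrow> bool" where
  "alg_closed_field _ \<longleftrightarrow> (\<forall>p::'k poly. degree p > 0 \<longrightarrow> (\<exists>x. poly p x = 0))"

(* A Lie algebra q of dimension n with basis x_0,...,x_{n-1}, given by structure
   constants: [x_i, x_j] = sum_{k<n} c i j k * x_k. *)
definition lie_struct :: "nat \<Rightarrow> (nat \<Rightarrow> nat \<Rightarrow> nat \<Rightarrow> 'k::field) \<Rightarrow> bool" where
  "lie_struct n c \<longleftrightarrow>
     (\<forall>i<n. \<forall>j<n. \<forall>k<n. c i j k = - c j i k) \<and>
     (\<forall>i<n. \<forall>j<n. \<forall>k<n. \<forall>m<n.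
        (\<Sum>l<n. c i j l * c l k m + c j k l * c l i m + c k i l * c l j m) = 0)"

(* Polynomials in commuting variables indexed by (i, a) standing for x_i t^a:
   the polynomial ring S(V) on the vector space V with basis the variables. *)
type_synonym 'k lpoly = "((nat \<times> int) \<Rightarrow>\<^sub>0 nat) \<Rightarrow>\<^sub>0 'k"

definition Var :: "nat \<times> int \<Rightarrow> 'k::comm_ring_1 lpoly" where
  "Var v = Poly_Mapping.single (Poly_Mapping.single v 1) 1"

definition Const :: "'k::comm_ring_1 \<Rightarrow> 'k lpoly" where
  "Const a = Poly_Mapping.single 0 a"

definition vars :: "'k::comm_ring_1 lpoly \<Rightarrow> (nat \<times> int) set" where
  "vars p = (\<Union>m\<in>Poly_Mapping.keys p. Poly_Mapping.keys m)"

definition pdiff :: "nat \<times> int \<Rightarrow> 'k::comm_ring_1 lpoly \<Rightarrow> 'k lpoly" where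
  "pdiff v p = (\<Sum>m\<in>Poly_Mapping.keys p.
      Poly_Mapping.single (m - Poly_Mapping.single v 1)
        (of_nat (Poly_Mapping.lookup m v) * Poly_Mapping.lookup p m))"

definition loop_br :: "nat \<Rightarrow> (nat \<Rightarrow> nat \<Rightarrow> nat \<Rightarrow> 'k::field) \<Rightarrow> nat \<times> int \<Rightarrow> nat \<times> int \<Rightarrow> 'k lpoly" where
  "loop_br n c u w = (\<Sum>k<n. Const (c (fst u) (fst w) k) * Var (k, snd u + snd w))"

definition pbr :: "nat \<Rightarrow> (nat \<Rightarrow> nat \<Rightarrow> nat \<Rightarrow> 'k::field) \<Rightarrow> 'k lpoly \<Rightarrow> 'k lpoly \<Rightarrow> 'k lpoly" where
  "pbr n c f g = (\<Sum>u\<in>vars f. \<Sum>w\<in>vars g. pdiff u f * pdiff w g * loop_br n c u w)"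

definition S_loop :: "nat \<Rightarrow> 'k::field lpoly set" where
  "S_loop n = {p. vars p \<subseteq> {..<n} \<times> UNIV}"

definition S_pos :: "nat \<Rightarrow> 'k::field lpoly set" where
  "S_pos n = {p. vars p \<subseteq> {..<n} \<times> {0..}}"

definition lin :: "((nat \<times> int) \<Rightarrow>\<^sub>0 'k::field) \<Rightarrow> 'k lpoly" where
  "lin a = (\<Sum>v\<in>Poly_Mapping.keys a. Const (Poly_Mapping.lookup a v) * Var v)"

definition q_neg :: "nat \<Rightarrow> 'k::field lpoly set" where
  "q_neg n = {lin a | a. Poly_Mapping.keys a \<subseteq> {..<n} \<times> {..0}}"

definition ideal_gen :: "nat \<Rightarrow> 'k::field lpoly set \<Rightarrow> 'k lpoly set" where
  "ideal_gen n G = {\<Sum>g\<in>F. h g * g | F h. finite F \<and> F \<subseteq> G \<and> (\<forall>g\<in>F. h g \<in> S_loop n)}"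

definition q_negneg :: "nat \<Rightarrow> 'k::field lpoly set" where
  "q_negneg n = {lin a | a. Poly_Mapping.keys a \<subseteq> {..<n} \<times> {..<0}}"

(* Z(hat q, [0]) = S(q[t])^{q[t^-1]} *)
definition Zcrit :: "nat \<Rightarrow> (nat \<Rightarrow> nat \<Rightarrow> nat \<Rightarrow> 'k::field) \<Rightarrow> 'k lpoly set" where
  "Zcrit n c = {Y \<in> S_pos n. \<forall>x\<in>q_neg n. pbr n c x Y \<in> ideal_gen n (q_negneg n)}"

end

theory Submission
  imports Defs
begin

(* For M :: int let {f,g}_M be the Poisson bracket built from
   [x_i t^a, x_j t^b]_M = [x_i,x_j] t^(a+b-M), so that {,}_0 is the Lie-Poisson bracket, and
   let J be the ideal generated by the negative modes x_i t^a, a < 0; then J meets S(q[t]) only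
   in 0, and Y is invariant iff {x_i t^a, Y} lies in J for all a <= 0.  The derivation D with
   D(x t^a) = (a+1) x t^(a+1) kills x t^(-1), hence preserves J and the invariants, and satisfies
     D{F,G}_(M+1) = {DF,G}_(M+1) + {F,DG}_(M+1) - (M+2) {F,G}_M.
   For invariants F, G of t-degrees at most N_F, N_G this gives {F,G}_M in J for all M >= 0 by
   induction on N_F + N_G - 2M: if N_F <= M, then {F,G}_M is a combination of the brackets
   {x_i t^(a-M), G} with a <= N_F, which lie in J by invariance of G; otherwise the identity
   reduces to smaller values, dividing by M+2 (characteristic 0).  At M = 0 the bracket lies in
   J and in S(q[t]), so it vanishes. *)

section \<open>Polynomial calculus\<close>

lemma update_eq_add_single:
  "k \<notin> Poly_Mapping.keys f \<Longrightarrow> Poly_Mapping.update k a f = f + Poly_Mapping.single k a"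
  by (intro poly_mapping_eqI) (auto simp: lookup_update lookup_add lookup_single in_keys_iff)

lemma keys_add_nat: "Poly_Mapping.keys (m + m') = Poly_Mapping.keys (m::'a \<Rightarrow>\<^sub>0 nat) \<union> Poly_Mapping.keys m'"
  by (auto simp: in_keys_iff lookup_add)

lemma poly_mapping_single_add_induct [case_names zero single add]:
  assumes "P 0" "\<And>k a. P (Poly_Mapping.single k a)" "\<And>p q. P p \<Longrightarrow> P q \<Longrightarrow> P (p + q)"
  shows "P (p :: 'a \<Rightarrow>\<^sub>0 'b::comm_monoid_add)"
proof (induction p rule: Poly_Mapping.update_induct)
  case const then show ?case using assms(1) .
next
  case (update f k a) then show ?case using assms(2,3) by (simp add: update_eq_add_single)
qed

lemma pdiff_sum_superset:
  assumes "finite S" "Poly_Mapping.keys p \<subseteq> S"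
  shows "pdiff v p = (\<Sum>m\<in>S. Poly_Mapping.single (m - Poly_Mapping.single v 1)
           (of_nat (Poly_Mapping.lookup m v) * Poly_Mapping.lookup p m))"
  unfolding pdiff_def using assms by (intro sum.mono_neutral_left) (auto simp: in_keys_iff)

lemma pdiff_zero [simp]: "pdiff v 0 = 0"
  by (simp add: pdiff_def)

lemma pdiff_add: "pdiff v (p + q) = pdiff v p + pdiff v q"
proof -
  let ?S = "Poly_Mapping.keys p \<union> Poly_Mapping.keys q"
  have "finite ?S" by simp
  with keys_add[of p q] show ?thesis
    by (subst (1 2 3) pdiff_sum_superset[of ?S])
       (auto simp: lookup_add distrib_left single_add sum.distrib)
qed

lemma pdiff_single:
  "pdiff v (Poly_Mapping.single m a) =
   Poly_Mapping.single (m - Poly_Mapping.single v 1) (of_nat (Poly_Mapping.lookup m v) * a)"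
  by (subst pdiff_sum_superset[of "{m}"]) auto

lemma pdiff_single_mult_single:
  "pdiff v (Poly_Mapping.single m a * Poly_Mapping.single m' b) =
   pdiff v (Poly_Mapping.single m a) * Poly_Mapping.single m' b
   + Poly_Mapping.single m a * pdiff v (Poly_Mapping.single m' (b::'k::comm_ring_1))"
proof -
  have lowered: "Poly_Mapping.single (m - Poly_Mapping.single v 1 + m') (of_nat (Poly_Mapping.lookup m v) * x)
      = Poly_Mapping.single (m + m' - Poly_Mapping.single v 1) (of_nat (Poly_Mapping.lookup m v) * x)"
    for m m' :: "(nat \<times> int) \<Rightarrow>\<^sub>0 nat" and x :: 'k
  proof (cases "Poly_Mapping.lookup m v = 0")
    case False
    then have "m - Poly_Mapping.single v 1 + m' = m + m' - Poly_Mapping.single v 1"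
      by (intro poly_mapping_eqI) (auto simp: lookup_add lookup_minus lookup_single when_def)
    then show ?thesis by simp
  qed simp
  have "pdiff v (Poly_Mapping.single m a) * Poly_Mapping.single m' b =
     Poly_Mapping.single (m + m' - Poly_Mapping.single v 1) (of_nat (Poly_Mapping.lookup m v) * (a * b))"
    using lowered[of m m' "a * b"] by (simp add: pdiff_single mult_single mult.assoc)
  moreover have "Poly_Mapping.single m a * pdiff v (Poly_Mapping.single m' b) =
     Poly_Mapping.single (m + m' - Poly_Mapping.single v 1) (of_nat (Poly_Mapping.lookup m' v) * (a * b))"
    using lowered[of m' m "a * b"] by (simp add: pdiff_single mult_single ac_simps)
  ultimately show ?thesis
    by (simp add: pdiff_single mult_single lookup_add distrib_right flip: single_add)
qed

lemma pdiff_mult: "pdiff v (p * q) = pdiff v p * q + p * pdiff v (q::'k::comm_ring_1 lpoly)"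
proof (induction p rule: poly_mapping_single_add_induct)
  case (single m a)
  show ?case
    by (induction q rule: poly_mapping_single_add_induct)
       (simp_all add: pdiff_single_mult_single distrib_left distrib_right pdiff_add)
qed (simp_all add: distrib_right pdiff_add)

lemma pdiff_Var: "pdiff w (Var v :: 'k::comm_ring_1 lpoly) = (if v = w then 1 else 0)"
  by (auto simp: Var_def pdiff_single lookup_single)

lemma pdiff_Const [simp]: "pdiff w (Const a :: 'k::comm_ring_1 lpoly) = 0"
  by (simp add: Const_def pdiff_single)

lemma Const_mult: "Const (a * b) = Const a * (Const b :: 'k::comm_ring_1 lpoly)"
  by (simp add: Const_def mult_single)

lemma Const_of_int: "Const (of_int k) = (of_int k :: 'k::comm_ring_1 lpoly)"
  by (simp add: Const_def)

lemma pdiff_eq_0_if_notin_vars: "v \<notin> vars p \<Longrightarrow> pdiff v p = 0"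
  unfolding pdiff_def vars_def by (intro sum.neutral) (auto simp: in_keys_iff)

lemma finite_vars [simp]: "finite (vars p)"
  by (simp add: vars_def)

lemma vars_zero [simp]: "vars 0 = {}"
  by (simp add: vars_def)

lemma vars_Var [simp]: "vars (Var v :: 'k::comm_ring_1 lpoly) = {v}"
  by (simp add: vars_def Var_def)

lemma vars_Const [simp]: "vars (Const a) = {}"
  by (simp add: vars_def Const_def)

lemma vars_of_int [simp]: "vars (of_int a :: 'k::comm_ring_1 lpoly) = {}"
  by (metis Const_def single_of_int vars_Const)

lemma vars_add: "vars (p + q) \<subseteq> vars p \<union> vars q"
  unfolding vars_def using keys_add[of p q] by blast

lemma vars_mult: "vars (p * q) \<subseteq> vars p \<union> vars (q::'k::comm_ring_1 lpoly)"
proof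
  fix v assume "v \<in> vars (p * q)"
  then obtain m where m: "m \<in> Poly_Mapping.keys (p * q)" "v \<in> Poly_Mapping.keys m"
    by (auto simp: vars_def)
  then obtain a b where "m = a + b" "a \<in> Poly_Mapping.keys p" "b \<in> Poly_Mapping.keys q"
    using keys_mult[of p q] by blast
  then show "v \<in> vars p \<union> vars q" using m(2) by (auto simp: vars_def keys_add_nat)
qed

lemma vars_sum: "vars (sum f A) \<subseteq> (\<Union>a\<in>A. vars (f a))"
  unfolding vars_def using keys_sum[of f A] by blast

lemma vars_pdiff: "vars (pdiff v p) \<subseteq> vars (p::'k::comm_ring_1 lpoly)"
proof -
  have "vars (pdiff v p) \<subseteq> (\<Union>m\<in>Poly_Mapping.keys p. vars (Poly_Mapping.single
          (m - Poly_Mapping.single v 1) (of_nat (Poly_Mapping.lookup m v) * Poly_Mapping.lookup p m)))"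
    unfolding pdiff_def by (rule vars_sum)
  also have "\<dots> \<subseteq> vars p"
  proof (rule UN_least)
    fix m assume "m \<in> Poly_Mapping.keys p"
    moreover have "Poly_Mapping.keys (m - Poly_Mapping.single v 1) \<subseteq> Poly_Mapping.keys m"
      by (auto simp: in_keys_iff lookup_minus)
    ultimately show "vars (Poly_Mapping.single (m - Poly_Mapping.single v 1)
        (of_nat (Poly_Mapping.lookup m v) * Poly_Mapping.lookup p m)) \<subseteq> vars p"
      by (auto simp: vars_def)
  qed
  finally show ?thesis .
qed

lemma lpoly_induct [case_names Const Var add mult]:
  fixes P :: "'k::comm_ring_1 lpoly \<Rightarrow> bool"
  assumes Const: "\<And>a. P (Const a)" and Var: "\<And>v. P (Var v)"
    and add: "\<And>p q. P p \<Longrightarrow> P q \<Longrightarrow> P (p + q)" and mult: "\<And>p q. P p \<Longrightarrow> P q \<Longrightarrow> P (p * q)"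
  shows "P p"
proof -
  have monomial: "P (Poly_Mapping.single m a)" for m a
  proof (induction m arbitrary: a rule: poly_mapping_single_add_induct)
    case zero then show ?case using Const by (simp add: Const_def)
  next
    case (single v k)
    show ?case
    proof (induction k arbitrary: a)
      case 0 then show ?case using Const by (simp add: Const_def)
    next
      case (Suc k)
      have "Poly_Mapping.single (Poly_Mapping.single v (Suc k)) a
            = Poly_Mapping.single (Poly_Mapping.single v k) a * Var v"
        by (simp add: Var_def mult_single flip: single_add)
      then show ?case using Suc mult Var by simp
    qed
  next
    case (add m m')
    have "Poly_Mapping.single (m + m') a = Poly_Mapping.single m a * Poly_Mapping.single m' (1::'k)"
      by (simp add: mult_single)
    then show ?case using add mult by simp
  qed
  show ?thesis
    by (induction p rule: poly_mapping_single_add_induct)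
       (use Const[of 0] monomial add in \<open>simp_all add: Const_def\<close>)
qed

section \<open>Derivations determined by their values on variables\<close>

definition extend_deriv :: "(nat \<times> int \<Rightarrow> 'k::comm_ring_1 lpoly) \<Rightarrow> 'k lpoly \<Rightarrow> 'k lpoly" where
  "extend_deriv \<phi> p = (\<Sum>v\<in>vars p. pdiff v p * \<phi> v)"

lemma extend_deriv_sum_superset:
  "finite V \<Longrightarrow> vars p \<subseteq> V \<Longrightarrow> extend_deriv \<phi> p = (\<Sum>v\<in>V. pdiff v p * \<phi> v)"
  unfolding extend_deriv_def by (intro sum.mono_neutral_left) (auto simp: pdiff_eq_0_if_notin_vars)

lemma extend_deriv_add: "extend_deriv \<phi> (p + q) = extend_deriv \<phi> p + extend_deriv \<phi> q"
proof -
  let ?V = "vars p \<union> vars q"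
  have "finite ?V" by simp
  with vars_add[of p q] show ?thesis
    by (subst (1 2 3) extend_deriv_sum_superset[of ?V])
       (auto simp: pdiff_add distrib_right sum.distrib)
qed

lemma extend_deriv_mult:
  "extend_deriv \<phi> (p * q) = extend_deriv \<phi> p * q + p * extend_deriv \<phi> q"
proof -
  let ?V = "vars p \<union> vars q"
  have "extend_deriv \<phi> (p * q) = (\<Sum>v\<in>?V. pdiff v (p * q) * \<phi> v)"
    using vars_mult[of p q] by (intro extend_deriv_sum_superset) auto
  also have "\<dots> = (\<Sum>v\<in>?V. pdiff v p * \<phi> v) * q + p * (\<Sum>v\<in>?V. pdiff v q * \<phi> v)"
    by (simp add: pdiff_mult algebra_simps sum.distrib sum_distrib_left sum_distrib_right)
  also have "\<dots> = extend_deriv \<phi> p * q + p * extend_deriv \<phi> q"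
    by (subst (1 2) extend_deriv_sum_superset[of ?V]) auto
  finally show ?thesis .
qed

lemma extend_deriv_zero [simp]: "extend_deriv \<phi> 0 = 0"
  by (simp add: extend_deriv_def)

lemma extend_deriv_Var [simp]: "extend_deriv \<phi> (Var v) = \<phi> v"
  by (simp add: extend_deriv_def pdiff_Var)

lemma extend_deriv_Const [simp]: "extend_deriv \<phi> (Const a) = 0"
  by (simp add: extend_deriv_def)

lemma extend_deriv_of_int [simp]: "extend_deriv \<phi> (of_int a) = 0"
  by (simp add: extend_deriv_def)

lemma extend_deriv_sum: "extend_deriv \<phi> (sum f A) = (\<Sum>a\<in>A. extend_deriv \<phi> (f a))"
  by (induction A rule: infinite_finite_induct) (simp_all add: extend_deriv_add)

lemma extend_deriv_fun_add:
  "extend_deriv (\<lambda>v. \<phi> v + \<psi> v) p = extend_deriv \<phi> p + extend_deriv \<psi> p"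
  by (simp add: extend_deriv_def algebra_simps sum.distrib)

lemma extend_deriv_fun_zero [simp]: "extend_deriv (\<lambda>v. 0) p = 0"
  by (simp add: extend_deriv_def)

lemma extend_deriv_fun_Leibniz:
  "extend_deriv (\<lambda>v. \<phi> v * q + r * \<psi> v) p = extend_deriv \<phi> p * q + r * extend_deriv \<psi> p"
  by (simp add: extend_deriv_def algebra_simps sum.distrib sum_distrib_left sum_distrib_right)

lemma vars_extend_deriv: "vars (extend_deriv \<phi> p) \<subseteq> vars p \<union> (\<Union>v\<in>vars p. vars (\<phi> v))"
proof -
  have "vars (extend_deriv \<phi> p) \<subseteq> (\<Union>v\<in>vars p. vars (pdiff v p * \<phi> v))"
    unfolding extend_deriv_def by (rule vars_sum)
  also have "\<dots> \<subseteq> vars p \<union> (\<Union>v\<in>vars p. vars (\<phi> v))"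
  proof (rule UN_least)
    fix v assume "v \<in> vars p"
    then show "vars (pdiff v p * \<phi> v) \<subseteq> vars p \<union> (\<Union>v\<in>vars p. vars (\<phi> v))"
      using vars_mult[of "pdiff v p" "\<phi> v"] vars_pdiff[of v p] by blast
  qed
  finally show ?thesis .
qed

section \<open>Shifted Poisson brackets\<close>

definition loop_br_shift ::
    "nat \<Rightarrow> (nat \<Rightarrow> nat \<Rightarrow> nat \<Rightarrow> 'k::comm_ring_1) \<Rightarrow> int \<Rightarrow> nat \<times> int \<Rightarrow> nat \<times> int \<Rightarrow> 'k lpoly" where
  "loop_br_shift n c M u w = (\<Sum>k<n. Const (c (fst u) (fst w) k) * Var (k, snd u + snd w - M))"

definition pbr_shift ::
    "nat \<Rightarrow> (nat \<Rightarrow> nat \<Rightarrow> nat \<Rightarrow> 'k::comm_ring_1) \<Rightarrow> int \<Rightarrow> 'k lpoly \<Rightarrow> 'k lpoly \<Rightarrow> 'k lpoly" where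
  "pbr_shift n c M f g = extend_deriv (\<lambda>u. extend_deriv (\<lambda>w. loop_br_shift n c M u w) g) f"

definition tderiv :: "'k::comm_ring_1 lpoly \<Rightarrow> 'k lpoly" where
  "tderiv = extend_deriv (\<lambda>v. of_int (snd v + 1) * Var (fst v, snd v + 1))"

lemma pbr_eq_pbr_shift_0: "pbr n c f g = pbr_shift n c 0 f g"
  unfolding pbr_def pbr_shift_def extend_deriv_def loop_br_shift_def loop_br_def
  by (simp add: sum_distrib_left mult.assoc)

lemma pbr_shift_add_left: "pbr_shift n c M (p + q) g = pbr_shift n c M p g + pbr_shift n c M q g"
  by (simp add: pbr_shift_def extend_deriv_add)

lemma pbr_shift_add_right: "pbr_shift n c M f (p + q) = pbr_shift n c M f p + pbr_shift n c M f q"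
  by (simp add: pbr_shift_def extend_deriv_add extend_deriv_fun_add)

lemma pbr_shift_mult_left:
  "pbr_shift n c M (p * q) g = pbr_shift n c M p g * q + p * pbr_shift n c M q g"
  by (simp add: pbr_shift_def extend_deriv_mult)

lemma pbr_shift_mult_right:
  "pbr_shift n c M f (p * q) = pbr_shift n c M f p * q + p * pbr_shift n c M f q"
  by (simp add: pbr_shift_def extend_deriv_mult extend_deriv_fun_Leibniz)

lemma pbr_shift_Const_left [simp]: "pbr_shift n c M (Const a) g = 0"
  by (simp add: pbr_shift_def)

lemma pbr_shift_of_int_left [simp]: "pbr_shift n c M (of_int a) g = 0"
  by (simp add: pbr_shift_def)

lemma pbr_shift_Const_right [simp]: "pbr_shift n c M f (Const a) = 0"
  by (simp add: pbr_shift_def)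

lemma pbr_shift_zero_left [simp]: "pbr_shift n c M 0 g = 0"
  by (simp add: pbr_shift_def)

lemma pbr_shift_zero_right [simp]: "pbr_shift n c M f 0 = 0"
  by (simp add: pbr_shift_def)

lemma pbr_shift_Var_left: "pbr_shift n c M (Var u) g = extend_deriv (loop_br_shift n c M u) g"
  by (simp add: pbr_shift_def)

lemma pbr_shift_Var_Var [simp]: "pbr_shift n c M (Var u) (Var w) = loop_br_shift n c M u w"
  by (simp add: pbr_shift_def)

lemma loop_br_shift_plus_1_left:
  "loop_br_shift n c M (fst u, snd u + 1) = loop_br_shift n c (M - 1) u"
  unfolding loop_br_shift_def by (simp add: algebra_simps)

lemma loop_br_shift_plus_1_right:
  "loop_br_shift n c M u (fst w, snd w + 1) = loop_br_shift n c (M - 1) u w"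
  unfolding loop_br_shift_def by (simp add: algebra_simps)

lemma tderiv_add: "tderiv (p + q) = tderiv p + tderiv q"
  by (simp add: tderiv_def extend_deriv_add)

lemma tderiv_mult: "tderiv (p * q) = tderiv p * q + p * tderiv q"
  by (simp add: tderiv_def extend_deriv_mult)

lemma tderiv_Var: "tderiv (Var v) = of_int (snd v + 1) * Var (fst v, snd v + 1)"
  by (simp add: tderiv_def)

lemma tderiv_Const [simp]: "tderiv (Const a) = 0"
  by (simp add: tderiv_def)

lemma tderiv_zero [simp]: "tderiv 0 = 0"
  by (simp add: tderiv_def)

lemma tderiv_sum: "tderiv (sum f A) = (\<Sum>a\<in>A. tderiv (f a))"
  by (simp add: tderiv_def extend_deriv_sum)

lemma tderiv_loop_br_shift:
  "tderiv (loop_br_shift n c M u w) = of_int (snd u + snd w - M + 1) * loop_br_shift n c (M - 1) u w"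
  unfolding loop_br_shift_def tderiv_sum
  by (simp add: tderiv_mult tderiv_Var sum_distrib_left algebra_simps)

lemma tderiv_pbr_shift:
  "tderiv (pbr_shift n c M f g) =
   pbr_shift n c M (tderiv f) g + pbr_shift n c M f (tderiv g) - of_int (M + 1) * pbr_shift n c (M - 1) f g"
proof (induction f rule: lpoly_induct)
  case (Var u)
  show ?case
  proof (induction g rule: lpoly_induct)
    case (Const a) then show ?case by (simp add: tderiv_Var pbr_shift_mult_left)
  next
    case (Var w)
    have "pbr_shift n c M (tderiv (Var u)) (Var w) =
        of_int (snd u + 1) * loop_br_shift n c (M - 1) u w"
      by (simp add: tderiv_Var pbr_shift_mult_left loop_br_shift_plus_1_left del: of_int_add)
    moreover have "pbr_shift n c M (Var u) (tderiv (Var w)) =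
        of_int (snd w + 1) * loop_br_shift n c (M - 1) u w"
      by (simp add: tderiv_Var pbr_shift_Var_left extend_deriv_mult loop_br_shift_plus_1_right
          del: of_int_add)
    ultimately show ?case by (simp add: tderiv_loop_br_shift algebra_simps)
  next
    case (add p q) then show ?case
      by (simp only: pbr_shift_add_right tderiv_add add.IH)
         (simp add: pbr_shift_add_right tderiv_add algebra_simps)
  next
    case (mult p q) then show ?case
      by (simp only: pbr_shift_mult_right tderiv_mult tderiv_add mult.IH)
         (simp add: pbr_shift_mult_right pbr_shift_add_right tderiv_mult algebra_simps)
  qed
next
  case (add p q) then show ?case
    by (simp only: pbr_shift_add_left tderiv_add add.IH)
       (simp add: pbr_shift_add_left tderiv_add algebra_simps)
next
  case (mult p q) then show ?case
    by (simp only: pbr_shift_mult_left tderiv_mult tderiv_add mult.IH)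
       (simp add: pbr_shift_mult_left pbr_shift_add_left tderiv_mult algebra_simps)
qed simp

section \<open>The ideal generated by the negative modes\<close>

(* The ideal generated by the x_i t^a with a < 0, described through monomials. *)
definition neg_ideal :: "'k::comm_ring_1 lpoly set" where
  "neg_ideal = {p. \<forall>m\<in>Poly_Mapping.keys p. \<exists>v\<in>Poly_Mapping.keys m. snd v < 0}"

lemma zero_in_neg_ideal [simp]: "0 \<in> neg_ideal"
  by (simp add: neg_ideal_def)

lemma neg_ideal_add: "p \<in> neg_ideal \<Longrightarrow> q \<in> neg_ideal \<Longrightarrow> p + q \<in> neg_ideal"
  using keys_add[of p q] unfolding neg_ideal_def by blast

lemma neg_ideal_sum: "(\<And>a. a \<in> A \<Longrightarrow> f a \<in> neg_ideal) \<Longrightarrow> sum f A \<in> neg_ideal"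
  by (induction A rule: infinite_finite_induct) (simp_all add: neg_ideal_add)

lemma neg_ideal_mult_left:
  assumes "p \<in> neg_ideal"
  shows "r * p \<in> neg_ideal"
  unfolding neg_ideal_def mem_Collect_eq
proof
  fix m assume "m \<in> Poly_Mapping.keys (r * p)"
  then obtain a b where "m = a + b" "b \<in> Poly_Mapping.keys p"
    using keys_mult[of r p] by blast
  with assms show "\<exists>v\<in>Poly_Mapping.keys m. snd v < 0"
    by (auto simp: neg_ideal_def keys_add_nat)
qed

lemma neg_ideal_diff: "p \<in> neg_ideal \<Longrightarrow> q \<in> neg_ideal \<Longrightarrow> p - q \<in> neg_ideal"
  using neg_ideal_add[OF _ neg_ideal_mult_left[of q "- 1"]] by simp

lemma Var_in_neg_ideal: "snd v < 0 \<Longrightarrow> Var v \<in> neg_ideal"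
  by (simp add: neg_ideal_def Var_def)

lemma neg_ideal_Const_mult_cancel:
  assumes "Const a * p \<in> neg_ideal" "a \<noteq> 0"
  shows "p \<in> (neg_ideal :: 'k::field lpoly set)"
proof -
  have "Const (inverse a) * Const a = 1"
    using assms(2) by (simp flip: Const_mult) (simp add: Const_def)
  then have "Const (inverse a) * (Const a * p) = p"
    by (simp add: mult.assoc[symmetric])
  then show ?thesis using neg_ideal_mult_left[OF assms(1)] by metis
qed

lemma neg_ideal_induct [consumes 1, case_names zero add mult_Var]:
  assumes "p \<in> neg_ideal"
    and zero: "P 0" and add: "\<And>p q. P p \<Longrightarrow> P q \<Longrightarrow> P (p + q)"
    and mult_Var: "\<And>r v. snd v < 0 \<Longrightarrow> P (r * Var v)"
  shows "P p"
  using assms(1)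
proof (induction p rule: Poly_Mapping.update_induct)
  case const show ?case by (rule zero)
next
  case (update f m a)
  then have "f \<in> neg_ideal" "\<exists>v\<in>Poly_Mapping.keys m. snd v < 0"
    by (auto simp: neg_ideal_def keys_update)
  then obtain v where v: "v \<in> Poly_Mapping.keys m" "snd v < 0" by blast
  then have "m - Poly_Mapping.single v 1 + Poly_Mapping.single v 1 = m"
    by (intro poly_mapping_eqI) (auto simp: lookup_add lookup_minus lookup_single when_def in_keys_iff)
  then have "Poly_Mapping.single m a = Poly_Mapping.single (m - Poly_Mapping.single v 1) a * Var v"
    by (simp add: Var_def mult_single)
  then show ?case
    using update \<open>f \<in> neg_ideal\<close> add mult_Var[OF v(2)] by (simp add: update_eq_add_single)
qed

lemma tderiv_neg_ideal: "p \<in> neg_ideal \<Longrightarrow> tderiv p \<in> neg_ideal"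
proof (induction p rule: neg_ideal_induct)
  case (mult_Var r v)
  have "tderiv (Var v) \<in> neg_ideal"
  proof (cases "snd v = -1")
    case False
    with mult_Var have "Var (fst v, snd v + 1) \<in> neg_ideal" by (intro Var_in_neg_ideal) simp
    then show ?thesis unfolding tderiv_Var by (rule neg_ideal_mult_left)
  qed (simp add: tderiv_Var)
  then show ?case
    unfolding tderiv_mult by (intro neg_ideal_add neg_ideal_mult_left Var_in_neg_ideal mult_Var)
qed (simp_all add: tderiv_add neg_ideal_add)

lemma neg_ideal_Int_S_pos: "neg_ideal \<inter> S_pos n = {0}"
proof -
  have "p = 0" if "p \<in> neg_ideal" "p \<in> S_pos n" for p
  proof (rule ccontr)
    assume "p \<noteq> 0"
    then obtain m where m: "m \<in> Poly_Mapping.keys p" by fastforce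
    with \<open>p \<in> neg_ideal\<close> obtain v where "v \<in> Poly_Mapping.keys m" "snd v < 0"
      unfolding neg_ideal_def by blast
    with m have "v \<in> vars p" "snd v < 0" unfolding vars_def by blast+
    with \<open>p \<in> S_pos n\<close> show False by (auto simp: S_pos_def)
  qed
  then show ?thesis by (auto simp: S_pos_def)
qed

lemma ideal_gen_q_negneg_subset: "ideal_gen n (q_negneg n) \<subseteq> neg_ideal"
proof
  fix p assume "p \<in> ideal_gen n (q_negneg n)"
  then obtain F h where p: "p = (\<Sum>g\<in>F. h g * g)" and F: "F \<subseteq> q_negneg n"
    unfolding ideal_gen_def by blast
  have "g \<in> neg_ideal" if "g \<in> q_negneg n" for g
  proof -
    from that obtain a where "g = lin a" "Poly_Mapping.keys a \<subseteq> {..<n} \<times> {..<0}"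
      unfolding q_negneg_def by blast
    then show ?thesis
      unfolding lin_def by (auto intro!: neg_ideal_sum neg_ideal_mult_left Var_in_neg_ideal)
  qed
  with F show "p \<in> neg_ideal" unfolding p by (auto intro!: neg_ideal_sum neg_ideal_mult_left)
qed

section \<open>Invariants modulo the negative modes\<close>

definition invariants_mod_neg :: "nat \<Rightarrow> (nat \<Rightarrow> nat \<Rightarrow> nat \<Rightarrow> 'k::field) \<Rightarrow> 'k lpoly set" where
  "invariants_mod_neg n c = {Y \<in> S_pos n. \<forall>i<n. \<forall>a\<le>0. pbr n c (Var (i, a)) Y \<in> neg_ideal}"

lemma S_pos_iff: "p \<in> S_pos n \<longleftrightarrow> (\<forall>v\<in>vars p. fst v < n \<and> 0 \<le> snd v)"
  unfolding S_pos_def by force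

lemma Zcrit_subset_invariants_mod_neg: "Zcrit n c \<subseteq> invariants_mod_neg n c"
proof
  fix Y assume Y: "Y \<in> Zcrit n c"
  have "Var (i, a) \<in> q_neg n" if "i < n" "a \<le> 0" for i a
  proof -
    have "Var (i, a) = lin (Poly_Mapping.single (i, a) 1)"
      by (simp add: lin_def Const_def)
    with that show ?thesis unfolding q_neg_def by auto
  qed
  with Y ideal_gen_q_negneg_subset show "Y \<in> invariants_mod_neg n c"
    unfolding Zcrit_def invariants_mod_neg_def by blast
qed

lemma vars_tderiv: "vars (tderiv p) \<subseteq> vars p \<union> (\<lambda>v. (fst v, snd v + 1)) ` vars p"
proof -
  have "vars (of_int k * Var w :: 'k::comm_ring_1 lpoly) \<subseteq> {w}" for k w
    using vars_mult[of "of_int k" "Var w"] by simp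
  then show ?thesis
    using vars_extend_deriv[of _ p] unfolding tderiv_def by blast
qed

lemma tderiv_S_pos: "p \<in> S_pos n \<Longrightarrow> tderiv p \<in> S_pos n"
  using vars_tderiv[of p] unfolding S_pos_iff by fastforce

lemma tderiv_invariants_mod_neg:
  assumes Y: "Y \<in> invariants_mod_neg n c"
  shows "tderiv Y \<in> invariants_mod_neg n c"
proof -
  have "pbr n c (Var (i, a)) (tderiv Y) \<in> neg_ideal" if "i < n" "a \<le> 0" for i a
  proof -
    let ?P = "pbr n c (Var (i, a + 1)) Y"
    have "pbr_shift n c 0 (tderiv (Var (i, a))) Y = of_int (a + 1) * ?P"
      by (simp add: tderiv_Var pbr_shift_mult_left pbr_eq_pbr_shift_0 del: of_int_add)
    moreover have "pbr_shift n c (- 1) (Var (i, a)) Y = ?P"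
      using loop_br_shift_plus_1_left[of n c 0 "(i, a)"]
      by (simp add: pbr_eq_pbr_shift_0 pbr_shift_Var_left)
    ultimately have "tderiv (pbr n c (Var (i, a)) Y) =
        of_int (a + 1) * ?P + pbr n c (Var (i, a)) (tderiv Y) - ?P"
      using tderiv_pbr_shift[of n c 0 "Var (i, a)" Y] by (simp add: pbr_eq_pbr_shift_0 del: of_int_add)
    then have "pbr n c (Var (i, a)) (tderiv Y) = tderiv (pbr n c (Var (i, a)) Y) - of_int a * ?P"
      by (simp add: algebra_simps)
    moreover have "of_int a * ?P \<in> neg_ideal"
      using Y that by (cases "a = 0") (auto simp: invariants_mod_neg_def intro: neg_ideal_mult_left)
    ultimately show ?thesis
      using Y that by (auto simp: invariants_mod_neg_def intro!: neg_ideal_diff tderiv_neg_ideal)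
  qed
  with Y show ?thesis by (simp add: invariants_mod_neg_def tderiv_S_pos)
qed

lemma vars_loop_br: "vars (loop_br n c u w) \<subseteq> {..<n} \<times> {snd u + snd w}"
proof -
  have "vars (loop_br n c u w) \<subseteq> (\<Union>k<n. vars (Const (c (fst u) (fst w) k) * Var (k, snd u + snd w)))"
    unfolding loop_br_def by (rule vars_sum)
  also have "\<dots> \<subseteq> {..<n} \<times> {snd u + snd w}"
  proof (rule UN_least)
    fix k assume "k \<in> {..<n}"
    then show "vars (Const (c (fst u) (fst w) k) * Var (k, snd u + snd w)) \<subseteq> {..<n} \<times> {snd u + snd w}"
      using vars_mult[of "Const (c (fst u) (fst w) k)" "Var (k, snd u + snd w)"] by auto
  qed
  finally show ?thesis .
qed

lemma pbr_S_pos: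
  assumes "f \<in> S_pos n" "g \<in> S_pos n"
  shows "pbr n c f g \<in> S_pos n"
proof -
  have "vars (pbr n c f g) \<subseteq>
          (\<Union>u\<in>vars f. \<Union>w\<in>vars g. vars (pdiff u f * pdiff w g * loop_br n c u w))"
    unfolding pbr_def by (rule order_trans[OF vars_sum UN_mono[OF order_refl vars_sum]])
  also have "\<dots> \<subseteq> (\<Union>u\<in>vars f. \<Union>w\<in>vars g. vars f \<union> vars g \<union> {..<n} \<times> {snd u + snd w})"
  proof (intro UN_mono order_refl)
    fix u w
    show "vars (pdiff u f * pdiff w g * loop_br n c u w) \<subseteq> vars f \<union> vars g \<union> {..<n} \<times> {snd u + snd w}"
      using vars_mult[of "pdiff u f * pdiff w g" "loop_br n c u w"] vars_mult[of "pdiff u f" "pdiff w g"]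
        vars_pdiff[of u f] vars_pdiff[of w g] vars_loop_br[of n c u w] by blast
  qed
  finally show ?thesis using assms unfolding S_pos_iff by fastforce
qed

lemma pbr_shift_eq_sum_pbr:
  "pbr_shift n c M f g = (\<Sum>u\<in>vars f. pdiff u f * pbr n c (Var (fst u, snd u - M)) g)"
proof -
  have "loop_br_shift n c 0 (fst u, snd u - M) = loop_br_shift n c M u" for u
    unfolding loop_br_shift_def by (simp add: algebra_simps)
  then show ?thesis
    by (simp add: pbr_eq_pbr_shift_0 pbr_shift_Var_left) (simp add: pbr_shift_def extend_deriv_def)
qed

lemma pbr_shift_in_neg_ideal_if_low_degree:
  assumes "f \<in> S_pos n" "\<forall>v\<in>vars f. snd v \<le> M" "g \<in> invariants_mod_neg n c"
  shows "pbr_shift n c M f g \<in> neg_ideal"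
  unfolding pbr_shift_eq_sum_pbr
proof (intro neg_ideal_sum neg_ideal_mult_left)
  fix u assume "u \<in> vars f"
  with assms show "pbr n c (Var (fst u, snd u - M)) g \<in> neg_ideal"
    unfolding S_pos_iff invariants_mod_neg_def by auto
qed

lemma loop_br_shift_antisym:
  assumes "lie_struct n c" "fst u < n" "fst w < n"
  shows "loop_br_shift n c M w u = - loop_br_shift n c M u w"
proof -
  have "Const (c (fst w) (fst u) k) * Var (k, snd w + snd u - M) =
        - (Const (c (fst u) (fst w) k) * Var (k, snd u + snd w - M))" if "k < n" for k
  proof -
    have "c (fst w) (fst u) k = - c (fst u) (fst w) k"
      using assms that unfolding lie_struct_def by blast
    then show ?thesis by (simp add: Const_def single_uminus add.commute)
  qed
  then show ?thesis
    unfolding loop_br_shift_def sum_negf[symmetric] by (intro sum.cong) auto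
qed

lemma pbr_shift_antisym:
  assumes "lie_struct n c" "f \<in> S_pos n" "g \<in> S_pos n"
  shows "pbr_shift n c M g f = - pbr_shift n c M f g"
proof -
  have "pbr_shift n c M g f =
        (\<Sum>w\<in>vars g. \<Sum>u\<in>vars f. pdiff w g * (pdiff u f * loop_br_shift n c M w u))"
    by (simp add: pbr_shift_def extend_deriv_def sum_distrib_left)
  also have "\<dots> = (\<Sum>u\<in>vars f. \<Sum>w\<in>vars g. pdiff w g * (pdiff u f * loop_br_shift n c M w u))"
    by (rule sum.swap)
  also have "\<dots> = (\<Sum>u\<in>vars f. \<Sum>w\<in>vars g. - (pdiff u f * (pdiff w g * loop_br_shift n c M u w)))"
  proof (intro sum.cong refl)
    fix u w assume "u \<in> vars f" "w \<in> vars g"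
    with assms(2,3) have "fst u < n" "fst w < n" unfolding S_pos_iff by auto
    with assms(1) have "loop_br_shift n c M w u = - loop_br_shift n c M u w"
      by (rule loop_br_shift_antisym)
    then show "pdiff w g * (pdiff u f * loop_br_shift n c M w u) =
        - (pdiff u f * (pdiff w g * loop_br_shift n c M u w))"
      by (simp add: mult.left_commute)
  qed
  also have "\<dots> = - pbr_shift n c M f g"
    unfolding pbr_shift_def extend_deriv_def sum_negf sum_distrib_left ..
  finally show ?thesis .
qed

lemma pbr_shift_invariants_in_neg_ideal:
  fixes c :: "nat \<Rightarrow> nat \<Rightarrow> nat \<Rightarrow> 'k::field_char_0"
  assumes "lie_struct n c" and "F \<in> invariants_mod_neg n c" "G \<in> invariants_mod_neg n c"
    and "\<forall>v\<in>vars F. snd v \<le> N\<^sub>F" "\<forall>v\<in>vars G. snd v \<le> N\<^sub>G" and "0 \<le> M"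
  shows "pbr_shift n c M F G \<in> neg_ideal"
  using assms(2-)
proof (induction "nat (N\<^sub>F + N\<^sub>G - 2 * M)" arbitrary: F G N\<^sub>F N\<^sub>G M rule: less_induct)
  case less
  have F: "F \<in> S_pos n" and G: "G \<in> S_pos n"
    using less.prems unfolding invariants_mod_neg_def by auto
  consider "N\<^sub>F \<le> M" | "N\<^sub>G \<le> M" | "M < N\<^sub>F" "M < N\<^sub>G" by linarith
  then show ?case
  proof cases
    case 1
    with less.prems show ?thesis by (intro pbr_shift_in_neg_ideal_if_low_degree[OF F]) auto
  next
    case 2
    with less.prems have "pbr_shift n c M G F \<in> neg_ideal"
      by (intro pbr_shift_in_neg_ideal_if_low_degree[OF G]) auto
    then show ?thesis
      using pbr_shift_antisym[OF assms(1) G F] neg_ideal_mult_left[of _ "- 1"] by fastforce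
  next
    case 3
    have "\<forall>v\<in>vars (tderiv F). snd v \<le> N\<^sub>F + 1" "\<forall>v\<in>vars (tderiv G). snd v \<le> N\<^sub>G + 1"
      using vars_tderiv[of F] vars_tderiv[of G] less.prems(3,4) by fastforce+
    with 3 less have "pbr_shift n c (M + 1) (tderiv F) G \<in> neg_ideal"
        "pbr_shift n c (M + 1) F (tderiv G) \<in> neg_ideal" "pbr_shift n c (M + 1) F G \<in> neg_ideal"
      by (auto intro!: less.hyps tderiv_invariants_mod_neg)
    moreover have "of_int (M + 2) * pbr_shift n c M F G =
        pbr_shift n c (M + 1) (tderiv F) G + pbr_shift n c (M + 1) F (tderiv G)
        - tderiv (pbr_shift n c (M + 1) F G)"
      using tderiv_pbr_shift[of n c "M + 1" F G] by (simp add: algebra_simps)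
    ultimately have "Const (of_int (M + 2)) * pbr_shift n c M F G \<in> neg_ideal"
      unfolding Const_of_int by (simp add: neg_ideal_diff neg_ideal_add tderiv_neg_ideal)
    then show ?thesis
      by (rule neg_ideal_Const_mult_cancel) (use less.prems(5) in \<open>simp only: of_int_eq_0_iff\<close>)
  qed
qed

theorem corollary2p3:
  fixes n :: nat and c :: "nat \<Rightarrow> nat \<Rightarrow> nat \<Rightarrow> 'k::field_char_0"
  assumes "alg_closed_field TYPE('k)"
    and "lie_struct n c"
    and "Y1 \<in> Zcrit n c" and "Y2 \<in> Zcrit n c"
  shows "pbr n c Y1 Y2 = 0"
proof -
  have Y1: "Y1 \<in> invariants_mod_neg n c" and Y2: "Y2 \<in> invariants_mod_neg n c"
    using assms(3,4) Zcrit_subset_invariants_mod_neg by blast+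
  have "\<forall>v\<in>vars Y1. snd v \<le> Max (snd ` vars Y1)" "\<forall>v\<in>vars Y2. snd v \<le> Max (snd ` vars Y2)"
    by simp_all
  from pbr_shift_invariants_in_neg_ideal[OF assms(2) Y1 Y2 this]
  have "pbr n c Y1 Y2 \<in> neg_ideal" by (simp add: pbr_eq_pbr_shift_0)
  moreover have "pbr n c Y1 Y2 \<in> S_pos n"
    using Y1 Y2 unfolding invariants_mod_neg_def by (intro pbr_S_pos) auto
  ultimately show ?thesis using neg_ideal_Int_S_pos by blast
qed

end
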